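(* Let $k\ge1$, let $GP=GP(3k,k)$ and let $C_O$ be its outer cycle $u_0u_1\dots u_{3k-1}u_0$. Let $\phi:E(C_O)\to\{1,2,3\}$ be a proper edge colouring of $C_O$. Then the following are equivalent: (i) there is a proper edge colouring $\gamma:E(GP)\to\{1,2,3\}$ with $\gamma|_{E(C_O)}=\phi$; (ii) there is a permutation $(a,b,c)$ of $(1,2,3)$ such that for every $i=1,\dots,k$, the triples $\phi_i$ and $\phi_{i+1}$ are adjacent vertices in one of the graphs $T$ or $H$ (defined below with this choice of $a,b,c$). Furthermore, if a colouring $\gamma$ as in (i) exists, it is unique.
   Context: $GP(3k,k)$ has vertex set $\{u_i,v_i : i\in\mathbb{Z}_{3k}\}$ and edges $u_iu_{i+1}$, $u_iv_i$, $v_iv_{i+k}$ for $i\in\mathbb{Z}_{3k}$ (indices modulo $3k$). For a colouring $\phi$ of (at least) the outer cycle, set, for $i=1,\dots,k+1$, $\phi_i=(\phi(u_iu_{i+1}),\phi(u_{k+i}u_{k+i+1}),\phi(u_{2k+i}u_{2k+i+1}))$ with indices modulo $3k$ (so $\phi_{k+1}=(\phi(u_{k+1}u_{k+2}),\phi(u_{2k+1}u_{2k+2}),\phi(u_1u_2))$). A triple $(x,y,z)$ is written $xyz$. Given a permutation $(a,b,c)$ of $(1,2,3)$, $T$ is the triangle with vertices $abc$, $bca$, $cab$, and $H$ is the $6$-cycle $aba - bcc - aab - cbc - baa - ccb - aba$ on the six indicated triples. *)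

theory Defs
  imports Main
begin

datatype gpv = U nat | V nat

definition oedge :: "nat \<Rightarrow> nat \<Rightarrow> gpv set" where
  "oedge k i = {U (i mod (3*k)), U ((i+1) mod (3*k))}"

definition outer_edges :: "nat \<Rightarrow> gpv set set" where
  "outer_edges k = {oedge k i | i. i < 3*k}"

definition GP_edges :: "nat \<Rightarrow> gpv set set" where
  "GP_edges k = outer_edges k
     \<union> {{U i, V i} | i. i < 3*k}
     \<union> {{V i, V ((i+k) mod (3*k))} | i. i < 3*k}"

definition proper_edge_colouring :: "gpv set set \<Rightarrow> (gpv set \<Rightarrow> nat) \<Rightarrow> bool" where
  "proper_edge_colouring E c \<longleftrightarrow>
     (\<forall>e\<in>E. c e \<in> {1,2,3}) \<and>
     (\<forall>e\<in>E. \<forall>e'\<in>E. e \<noteq> e' \<and> e \<inter> e' \<noteq> {} \<longrightarrow> c e \<noteq> c e')"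

definition phi_tr :: "nat \<Rightarrow> (gpv set \<Rightarrow> nat) \<Rightarrow> nat \<Rightarrow> nat \<times> nat \<times> nat" where
  "phi_tr k phi i = (phi (oedge k i), phi (oedge k (k+i)), phi (oedge k (2*k+i)))"

definition T_adj :: "nat \<Rightarrow> nat \<Rightarrow> nat \<Rightarrow> nat \<times> nat \<times> nat \<Rightarrow> nat \<times> nat \<times> nat \<Rightarrow> bool" where
  "T_adj a b c x y \<longleftrightarrow> x \<noteq> y \<and> x \<in> {(a,b,c),(b,c,a),(c,a,b)} \<and> y \<in> {(a,b,c),(b,c,a),(c,a,b)}"

definition H_edges :: "nat \<Rightarrow> nat \<Rightarrow> nat \<Rightarrow> ((nat \<times> nat \<times> nat) \<times> (nat \<times> nat \<times> nat)) set" where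
  "H_edges a b c = {((a,b,a),(b,c,c)), ((b,c,c),(a,a,b)), ((a,a,b),(c,b,c)),
                    ((c,b,c),(b,a,a)), ((b,a,a),(c,c,b)), ((c,c,b),(a,b,a))}"

definition H_adj :: "nat \<Rightarrow> nat \<Rightarrow> nat \<Rightarrow> nat \<times> nat \<times> nat \<Rightarrow> nat \<times> nat \<times> nat \<Rightarrow> bool" where
  "H_adj a b c x y \<longleftrightarrow> (x,y) \<in> H_edges a b c \<or> (y,x) \<in> H_edges a b c"

end

theory Submission
  imports Defs
begin

text \<open>
  In an extension of phi, the spoke u_p v_p must receive the colour S_p missing at u_p from
  its two outer edges. The inner edges form the k triangles v_j v_(j+k) v_(j+2k); a triangle
  uses all three colours, and each of its vertices sees on its spoke the colour of the opposite
  triangle edge, so the inner edge v_p v_(p+k) is forced to have colour S_(p+2k). Hence an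
  extension is unique, and it exists iff S_j \<noteq> S_(j+k) for all j, i.e. iff the three spoke
  colours of every triangle are distinct.

  The spoke colours of the triangle through v_(i+1) are the componentwise third colours of the
  triples phi_i and phi_(i+1), so the condition is local along phi_1, ..., phi_(k+1). A finite
  check shows that these admissible pairs of triples are exactly the edges of T \<union> H for the
  various permutations (a, b, c), and that an admissible step leaving a vertex of T \<union> H is an
  edge of the same T \<union> H; so the whole chain lives in a single one of these graphs.
\<close>

section \<open>Colour triples and the graphs T and H\<close>

definition third_colour :: "nat \<Rightarrow> nat \<Rightarrow> nat" where
  "third_colour c d = 6 - c - d"

lemma third_colour_distinct:
  assumes "c \<in> {1, 2, 3}" and "d \<in> {1, 2, 3}" and "c \<noteq> d"
  shows "third_colour c d \<in> {1, 2, 3} \<and> distinct [c, d, third_colour c d]"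
  using assms by (auto simp: third_colour_def)

lemma third_colour_unique:
  assumes "c \<in> {1, 2, 3}" and "d \<in> {1, 2, 3}" and "e \<in> {1, 2, 3}" and "distinct [c, d, e]"
  shows "e = third_colour c d"
  using assms by (auto simp: third_colour_def)

text \<open>For x = phi_i and y = phi_(i+1), the componentwise third colours are the colours forced on
  the spokes at u_(i+1), u_(k+i+1), u_(2k+i+1), which end in one inner triangle.\<close>

fun admissible_step :: "nat \<times> nat \<times> nat \<Rightarrow> nat \<times> nat \<times> nat \<Rightarrow> bool" where
  "admissible_step (x1, x2, x3) (y1, y2, y3) \<longleftrightarrow>
     {x1, x2, x3, y1, y2, y3} \<subseteq> {1, 2, 3} \<and> x1 \<noteq> y1 \<and> x2 \<noteq> y2 \<and> x3 \<noteq> y3 \<and>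
     distinct [third_colour x1 y1, third_colour x2 y2, third_colour x3 y3]"

definition TH_adj :: "nat \<Rightarrow> nat \<Rightarrow> nat \<Rightarrow> nat \<times> nat \<times> nat \<Rightarrow> nat \<times> nat \<times> nat \<Rightarrow> bool" where
  "TH_adj a b c x y \<longleftrightarrow> T_adj a b c x y \<or> H_adj a b c x y"

definition TH_vertices :: "nat \<Rightarrow> nat \<Rightarrow> nat \<Rightarrow> (nat \<times> nat \<times> nat) set" where
  "TH_vertices a b c =
     {(a, b, c), (b, c, a), (c, a, b), (a, b, a), (b, c, c), (a, a, b), (c, b, c), (b, a, a), (c, c, b)}"

lemma permutation_123:
  assumes "{a, b, c} = {1, 2, 3::nat}"
  shows "(a, b, c) \<in> {(1, 2, 3), (1, 3, 2), (2, 1, 3), (2, 3, 1), (3, 1, 2), (3, 2, 1)}"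
proof -
  have abc: "a \<in> {1, 2, 3}" "b \<in> {1, 2, 3}" "c \<in> {1, 2, 3}" using assms by blast+
  have "1 \<in> {a, b, c}" "2 \<in> {a, b, c}" "3 \<in> {a, b, c}" using assms by blast+
  with abc show ?thesis by (elim insertE[of a] insertE[of b] insertE[of c] emptyE) simp_all
qed

lemma TH_adj_admissible:
  assumes "{a, b, c} = {1, 2, 3::nat}" and "TH_adj a b c x y"
  shows "admissible_step x y"
  using permutation_123[OF assms(1)] assms(2)
  by (auto simp: TH_adj_def T_adj_def H_adj_def H_edges_def third_colour_def)

lemma TH_adj_in_TH_vertices:
  assumes "TH_adj a b c w x"
  shows "x \<in> TH_vertices a b c"
  using assms by (auto simp: TH_adj_def T_adj_def H_adj_def H_edges_def TH_vertices_def)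

lemma admissible_step_colours:
  assumes "admissible_step (x1, x2, x3) (y1, y2, y3)"
  shows "x1 \<in> {1, 2, 3}" "x2 \<in> {1, 2, 3}" "x3 \<in> {1, 2, 3}"
    and "y1 \<in> {1, 2, 3}" "y2 \<in> {1, 2, 3}" "y3 \<in> {1, 2, 3}"
  using assms by auto

lemma admissible_step_source_in_TH_vertices:
  assumes "admissible_step x y"
  obtains a b c where "{a, b, c} = {1, 2, 3::nat}" and "x \<in> TH_vertices a b c"
proof -
  obtain x1 x2 x3 y1 y2 y3 where xy: "x = (x1, x2, x3)" "y = (y1, y2, y3)"
    by (cases x, cases y) auto
  note colours = admissible_step_colours[OF assms[unfolded xy]]
  have "\<not> (x1 = x2 \<and> x2 = x3)"
    using assms colours(4-6) unfolding xy by (auto simp: third_colour_def)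
  moreover have "\<forall>x1\<in>{1, 2, 3}. \<forall>x2\<in>{1, 2, 3}. \<forall>x3\<in>{1, 2, 3::nat}. \<not> (x1 = x2 \<and> x2 = x3) \<longrightarrow>
      (x1, x2, x3) \<in> TH_vertices 1 2 3 \<union> TH_vertices 1 3 2 \<union> TH_vertices 2 1 3 \<union>
        TH_vertices 2 3 1 \<union> TH_vertices 3 1 2 \<union> TH_vertices 3 2 1"
    by (simp add: TH_vertices_def)
  moreover have "{1, 2, 3} = {1, 2, 3::nat}" "{1, 3, 2} = {1, 2, 3::nat}" "{2, 1, 3} = {1, 2, 3::nat}"
    "{2, 3, 1} = {1, 2, 3::nat}" "{3, 1, 2} = {1, 2, 3::nat}" "{3, 2, 1} = {1, 2, 3::nat}"
    by auto
  ultimately show ?thesis using that colours(1-3) unfolding xy by (metis Un_iff)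
qed

lemma admissible_step_TH_adj:
  assumes "{a, b, c} = {1, 2, 3::nat}" and "x \<in> TH_vertices a b c" and "admissible_step x y"
  shows "TH_adj a b c x y"
proof -
  have table: "\<forall>x\<in>TH_vertices a b c. \<forall>y1\<in>{1, 2, 3}. \<forall>y2\<in>{1, 2, 3}. \<forall>y3\<in>{1, 2, 3}.
      admissible_step x (y1, y2, y3) \<longrightarrow> TH_adj a b c x (y1, y2, y3)"
    using permutation_123[OF assms(1)]
    by (elim insertE emptyE; simp only: prod.inject; elim conjE; hypsubst;
        simp add: TH_vertices_def TH_adj_def T_adj_def H_adj_def H_edges_def third_colour_def)
  obtain x1 x2 x3 y1 y2 y3 where xy: "x = (x1, x2, x3)" "y = (y1, y2, y3)"
    by (cases x, cases y) auto
  show ?thesis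
    using table assms(2,3) admissible_step_colours(4-6)[OF assms(3)[unfolded xy]] unfolding xy by blast
qed

lemma admissible_chain_iff_TH_chain:
  fixes x :: "nat \<Rightarrow> nat \<times> nat \<times> nat"
  shows "(\<forall>i\<in>{1..n}. admissible_step (x i) (x (i + 1))) \<longleftrightarrow>
    (\<exists>a b c. {a, b, c} = {1, 2, 3::nat} \<and> (\<forall>i\<in>{1..n}. TH_adj a b c (x i) (x (i + 1))))"
proof
  assume adm: "\<forall>i\<in>{1..n}. admissible_step (x i) (x (i + 1))"
  show "\<exists>a b c. {a, b, c} = {1, 2, 3::nat} \<and> (\<forall>i\<in>{1..n}. TH_adj a b c (x i) (x (i + 1)))"
  proof (cases "n = 0")
    case True
    then show ?thesis by auto
  next
    case False
    then have "admissible_step (x 1) (x (1 + 1))" using adm by simp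
    then obtain a b c where abc: "{a, b, c} = {1, 2, 3::nat}" and "x 1 \<in> TH_vertices a b c"
      by (rule admissible_step_source_in_TH_vertices)
    have "i \<le> n \<longrightarrow> TH_adj a b c (x i) (x (i + 1))" if "1 \<le> i" for i
      using that
    proof (induction i rule: nat_induct_at_least)
      case base
      show ?case using admissible_step_TH_adj[OF abc \<open>x 1 \<in> _\<close>] adm by simp
    next
      case (Suc i)
      show ?case
      proof
        assume "Suc i \<le> n"
        then have "x (Suc i) \<in> TH_vertices a b c"
          using Suc TH_adj_in_TH_vertices by simp
        then show "TH_adj a b c (x (Suc i)) (x (Suc i + 1))"
          using admissible_step_TH_adj[OF abc] adm \<open>Suc i \<le> n\<close> by simp
      qed
    qed
    then have "\<forall>i\<in>{1..n}. TH_adj a b c (x i) (x (i + 1))" by auto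
    with abc show ?thesis by blast
  qed
next
  assume "\<exists>a b c. {a, b, c} = {1, 2, 3::nat} \<and> (\<forall>i\<in>{1..n}. TH_adj a b c (x i) (x (i + 1)))"
  then show "\<forall>i\<in>{1..n}. admissible_step (x i) (x (i + 1))"
    using TH_adj_admissible by blast
qed

lemma periodic_add_mult:
  fixes f :: "nat \<Rightarrow> 'a"
  assumes period: "\<And>j. f (j + p) = f j"
  shows "f (j + t * p) = f j"
proof (induction t)
  case (Suc t)
  have "j + Suc t * p = (j + t * p) + p" by simp
  with Suc show ?case by (simp only: period)
qed simp

lemma shift_closed_above_window:
  fixes P :: "nat \<Rightarrow> bool"
  assumes "k \<ge> 1" and step: "\<And>j. P j \<Longrightarrow> P (j + k)" and window: "\<forall>i\<in>{1..k}. P (i + m)"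
    and "m < j"
  shows "P j"
  using \<open>m < j\<close>
proof (induction j rule: less_induct)
  case (less j)
  show ?case
  proof (cases "j \<le> m + k")
    case True
    with less.prems have "j - m \<in> {1..k}" and "j - m + m = j" by auto
    with window show ?thesis by metis
  next
    case False
    then have "P (j - k)" using less.IH[of "j - k"] \<open>k \<ge> 1\<close> by simp
    with step[of "j - k"] False show ?thesis by simp
  qed
qed

lemma periodic_shift_distinct_iff:
  fixes f :: "nat \<Rightarrow> 'a" and k m :: nat
  assumes "k \<ge> 1" and period: "\<And>j. f (j + 3 * k) = f j"
  shows "(\<forall>j. f j \<noteq> f (j + k)) \<longleftrightarrow>
    (\<forall>i\<in>{1..k}. distinct [f (i + m), f (i + m + k), f (i + m + 2 * k)])"
proof -
  define P where "P j \<longleftrightarrow> distinct [f j, f (j + k), f (j + 2 * k)]" for j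
  have P_alt: "P j \<longleftrightarrow> f j \<noteq> f (j + k) \<and> f (j + k) \<noteq> f (j + k + k) \<and> f (j + 2 * k) \<noteq> f (j + 2 * k + k)"
    for j
  proof -
    have two: "j + k + k = j + 2 * k" and three: "f (j + 2 * k + k) = f j"
      using period[of j] by (simp_all add: add.assoc)
    show ?thesis unfolding P_def two three by auto
  qed
  have "(\<forall>j. f j \<noteq> f (j + k)) \<longleftrightarrow> (\<forall>j. P j)"
    unfolding P_alt by blast
  also have "\<dots> \<longleftrightarrow> (\<forall>i\<in>{1..k}. P (i + m))"
  proof
    assume window: "\<forall>i\<in>{1..k}. P (i + m)"
    have step: "P (j + k)" if "P j" for j
    proof -
      have "j + k + k = j + 2 * k" and "f (j + k + 2 * k) = f j"
        using period[of j] by (simp_all add: add.assoc)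
      then have "P (j + k) \<longleftrightarrow> distinct [f (j + k), f (j + 2 * k), f j]"
        by (simp only: P_def)
      with that show ?thesis unfolding P_def by auto
    qed
    show "\<forall>j. P j"
    proof
      fix j
      have "m + 1 \<le> (m + 1) * (3 * k)" using mult_le_mono2[of 1 "3 * k" "m + 1"] \<open>k \<ge> 1\<close> by simp
      then have "P (j + (m + 1) * (3 * k))"
        using shift_closed_above_window[OF \<open>k \<ge> 1\<close> step window] by simp
      moreover have "P (q + 3 * k) = P q" for q
        unfolding P_def using period[of q] period[of "q + k"] period[of "q + 2 * k"]
        by (simp add: algebra_simps)
      ultimately show "P j" by (simp only: periodic_add_mult)
    qed
  qed simp
  finally show ?thesis unfolding P_def by (simp add: add.assoc)
qed

lemma proper_edge_colouringD:
  assumes "proper_edge_colouring E c" and "e \<in> E" and "e' \<in> E" and "e \<noteq> e'"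
    and "v \<in> e" and "v \<in> e'"
  shows "c e \<noteq> c e'"
  using assms unfolding proper_edge_colouring_def by blast

lemma proper_edge_colouring_range:
  assumes "proper_edge_colouring E c" and "e \<in> E"
  shows "c e \<in> {1, 2, 3}"
  using assms unfolding proper_edge_colouring_def by blast

lemma proper_edge_colouring_distinct3:
  assumes "proper_edge_colouring E c" and "{e1, e2, e3} \<subseteq> E" and "distinct [e1, e2, e3]"
    and "v \<in> e1" and "v \<in> e2" and "v \<in> e3"
  shows "distinct [c e1, c e2, c e3]"
proof -
  have "e1 \<in> E" "e2 \<in> E" "e3 \<in> E" using assms(2) by auto
  with assms(3-6) show ?thesis by (auto dest: proper_edge_colouringD[OF assms(1)])
qed

lemma proper_edge_colouringI:
  assumes "\<And>e. e \<in> E \<Longrightarrow> c e \<in> {1, 2, 3}"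
    and "\<And>v. \<exists>e1 e2 e3. {e \<in> E. v \<in> e} \<subseteq> {e1, e2, e3} \<and> distinct [c e1, c e2, c e3]"
  shows "proper_edge_colouring E c"
  unfolding proper_edge_colouring_def
proof (intro conjI ballI impI)
  fix e e'
  assume "e \<in> E" and "e' \<in> E" and "e \<noteq> e' \<and> e \<inter> e' \<noteq> {}"
  then obtain v where "v \<in> e" and "v \<in> e'" by blast
  obtain e1 e2 e3 where star: "{e \<in> E. v \<in> e} \<subseteq> {e1, e2, e3}" and "distinct [c e1, c e2, c e3]"
    using assms(2)[of v] by (elim exE conjE)
  have "e \<in> {e1, e2, e3}" "e' \<in> {e1, e2, e3}"
    using star \<open>e \<in> E\<close> \<open>e' \<in> E\<close> \<open>v \<in> e\<close> \<open>v \<in> e'\<close> by auto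
  with \<open>distinct [c e1, c e2, c e3]\<close> \<open>e \<noteq> e' \<and> _\<close> show "c e \<noteq> c e'" by auto
qed (rule assms(1))

section \<open>The generalized Petersen graph GP(3k, k)\<close>

definition spoke :: "nat \<Rightarrow> nat \<Rightarrow> gpv set" where
  "spoke k p = {U (p mod (3 * k)), V (p mod (3 * k))}"

definition inner_edge :: "nat \<Rightarrow> nat \<Rightarrow> gpv set" where
  "inner_edge k p = {V (p mod (3 * k)), V ((p + k) mod (3 * k))}"

lemma mod_add_shift_neq:
  fixes j d n :: nat
  assumes "0 < d" and "d < n"
  shows "(j + d) mod n \<noteq> j mod n"
proof
  assume "(j + d) mod n = j mod n"
  then have "n dvd d" using mod_eq_dvd_iff_nat[of j "j + d" n] by simp
  with assms show False using nat_dvd_not_less by blast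
qed

lemma oedge_mod: "oedge k (i mod (3 * k)) = oedge k i"
  unfolding oedge_def by (simp add: mod_Suc_eq)

lemma oedge_add_period [simp]: "oedge k (i + 3 * k) = oedge k i"
  by (metis oedge_mod mod_add_self2)

lemma oedge_pred:
  assumes "k \<ge> 1"
  shows "oedge k (p + 3 * k - 1) = {U ((p + 3 * k - 1) mod (3 * k)), U (p mod (3 * k))}"
proof -
  have "p + 3 * k - 1 + 1 = p + 3 * k" using assms by simp
  then show ?thesis unfolding oedge_def by simp
qed

lemma oedge_pred_Suc_mod:
  assumes "k \<ge> 1"
  shows "oedge k (Suc i mod (3 * k) + 3 * k - 1) = oedge k i"
proof -
  have "Suc i mod (3 * k) + 3 * k - 1 = Suc i mod (3 * k) + (3 * k - 1)"
    and "Suc i + (3 * k - 1) = i + 3 * k"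
    using assms by simp_all
  then have "(Suc i mod (3 * k) + 3 * k - 1) mod (3 * k) = (i + 3 * k) mod (3 * k)"
    by (metis mod_add_left_eq)
  then show ?thesis by (metis oedge_mod oedge_add_period)
qed

lemma spoke_mod: "spoke k (p mod (3 * k)) = spoke k p"
  unfolding spoke_def by simp

lemma inner_edge_mod: "inner_edge k (p mod (3 * k)) = inner_edge k p"
  unfolding inner_edge_def by (simp add: mod_add_left_eq)

lemma inner_edge_add_period [simp]: "inner_edge k (p + 3 * k) = inner_edge k p"
proof -
  have "p + 3 * k + k = (p + k) + 3 * k" by simp
  then show ?thesis unfolding inner_edge_def by (metis mod_add_self2)
qed

lemma inner_edge_opposite: "inner_edge k ((q + k) mod (3 * k) + 2 * k) = inner_edge k q"
proof -
  have "((q + k) mod (3 * k) + 2 * k) mod (3 * k) = (q + k + 2 * k) mod (3 * k)"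
    by (rule mod_add_left_eq)
  also have "q + k + 2 * k = q + 3 * k" by simp
  finally have "((q + k) mod (3 * k) + 2 * k) mod (3 * k) = q mod (3 * k)" by simp
  moreover have "((q + k) mod (3 * k) + 2 * k + k) mod (3 * k) = (q + k) mod (3 * k)"
  proof -
    have "(q + k) mod (3 * k) + 2 * k + k = (q + k) mod (3 * k) + 3 * k" by simp
    then show ?thesis by simp
  qed
  ultimately show ?thesis unfolding inner_edge_def by simp
qed

lemma oedge_in_outer_edges:
  assumes "k \<ge> 1"
  shows "oedge k i \<in> outer_edges k"
proof -
  have "i mod (3 * k) < 3 * k" using assms by simp
  then have "oedge k (i mod (3 * k)) \<in> outer_edges k" unfolding outer_edges_def by blast
  then show ?thesis by (simp only: oedge_mod)
qed

lemma outer_edges_subset_GP_edges: "outer_edges k \<subseteq> GP_edges k"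
  unfolding GP_edges_def by blast

lemma spoke_in_GP_edges:
  assumes "k \<ge> 1"
  shows "spoke k p \<in> GP_edges k"
proof -
  have "p mod (3 * k) < 3 * k" using assms by simp
  then have "spoke k p \<in> {{U i, V i} |i. i < 3 * k}" unfolding spoke_def by blast
  then show ?thesis unfolding GP_edges_def by blast
qed

lemma inner_edge_in_GP_edges:
  assumes "k \<ge> 1"
  shows "inner_edge k p \<in> GP_edges k"
proof -
  have "p mod (3 * k) < 3 * k" using assms by simp
  moreover have "inner_edge k p = {V (p mod (3 * k)), V ((p mod (3 * k) + k) mod (3 * k))}"
    unfolding inner_edge_def by (simp add: mod_add_left_eq)
  ultimately have "inner_edge k p \<in> {{V i, V ((i + k) mod (3 * k))} |i. i < 3 * k}" by blast
  then show ?thesis unfolding GP_edges_def by blast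
qed

lemma GP_edges_cases:
  assumes "e \<in> GP_edges k"
  obtains (outer) i where "e = oedge k i" | (spoke) p where "e = spoke k p"
    | (inner) p where "e = inner_edge k p"
  using assms unfolding GP_edges_def
proof (elim UnE)
  assume "e \<in> outer_edges k"
  then show thesis using outer unfolding outer_edges_def by blast
next
  assume "e \<in> {{U i, V i} |i. i < 3 * k}"
  then obtain i where "e = {U i, V i}" and "i < 3 * k" by blast
  then have "e = spoke k i" unfolding spoke_def by simp
  then show thesis by (rule spoke)
next
  assume "e \<in> {{V i, V ((i + k) mod (3 * k))} |i. i < 3 * k}"
  then obtain i where "e = {V i, V ((i + k) mod (3 * k))}" and "i < 3 * k" by blast
  then have "e = inner_edge k i" unfolding inner_edge_def by simp
  then show thesis by (rule inner)
qed

lemma spoke_not_outer: "spoke k p \<notin> outer_edges k"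
  unfolding outer_edges_def spoke_def oedge_def by auto

lemma inner_edge_not_outer: "inner_edge k p \<notin> outer_edges k"
  unfolding outer_edges_def inner_edge_def oedge_def by auto

lemma inner_edge_neq_spoke: "inner_edge k p \<noteq> spoke k q"
  unfolding inner_edge_def spoke_def by auto

lemma spoke_eq_imp_mod_eq:
  assumes "spoke k p = spoke k q"
  shows "p mod (3 * k) = q mod (3 * k)"
  using assms unfolding spoke_def by (metis doubleton_eq_iff gpv.inject(1) gpv.distinct(1))

lemma inner_edge_eq_imp_mod_eq:
  assumes "k \<ge> 1" and "inner_edge k p = inner_edge k q"
  shows "p mod (3 * k) = q mod (3 * k)"
proof (rule ccontr)
  assume ne: "p mod (3 * k) \<noteq> q mod (3 * k)"
  then have pq: "p mod (3 * k) = (q + k) mod (3 * k)" and qp: "q mod (3 * k) = (p + k) mod (3 * k)"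
    using assms(2) unfolding inner_edge_def by (auto simp: doubleton_eq_iff)
  have "(q + k) mod (3 * k) = (q mod (3 * k) + k) mod (3 * k)" by (simp add: mod_add_left_eq)
  also have "\<dots> = ((p + k) mod (3 * k) + k) mod (3 * k)" by (simp only: qp)
  also have "\<dots> = (p + 2 * k) mod (3 * k)" by (simp add: mod_add_left_eq mult_2 add.assoc)
  finally have "(p + 2 * k) mod (3 * k) = p mod (3 * k)" using pq by simp
  moreover have "(p + 2 * k) mod (3 * k) \<noteq> p mod (3 * k)"
    using assms(1) by (intro mod_add_shift_neq) simp_all
  ultimately show False by simp
qed

lemma GP_edges_at_U:
  assumes "k \<ge> 1"
  shows "{e \<in> GP_edges k. U p \<in> e} \<subseteq> {oedge k (p + 3 * k - 1), oedge k p, spoke k p}"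
proof
  fix e
  assume "e \<in> {e \<in> GP_edges k. U p \<in> e}"
  then have "e \<in> GP_edges k" and U_p: "U p \<in> e" by auto
  from this(1) show "e \<in> {oedge k (p + 3 * k - 1), oedge k p, spoke k p}"
  proof (cases rule: GP_edges_cases)
    case (outer i)
    with U_p have "p = i mod (3 * k) \<or> p = Suc i mod (3 * k)" unfolding oedge_def by auto
    then show ?thesis
    proof
      assume "p = i mod (3 * k)"
      then show ?thesis using outer oedge_mod by simp
    next
      assume "p = Suc i mod (3 * k)"
      then show ?thesis using outer oedge_pred_Suc_mod[OF assms] by simp
    qed
  next
    case (spoke q)
    with U_p have "p = q mod (3 * k)" unfolding spoke_def by auto
    then show ?thesis using spoke spoke_mod by simp
  next
    case (inner q)
    with U_p show ?thesis unfolding inner_edge_def by auto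
  qed
qed

lemma GP_edges_at_V:
  "{e \<in> GP_edges k. V p \<in> e} \<subseteq> {spoke k p, inner_edge k p, inner_edge k (p + 2 * k)}"
proof
  fix e
  assume "e \<in> {e \<in> GP_edges k. V p \<in> e}"
  then have "e \<in> GP_edges k" and V_p: "V p \<in> e" by auto
  from this(1) show "e \<in> {spoke k p, inner_edge k p, inner_edge k (p + 2 * k)}"
  proof (cases rule: GP_edges_cases)
    case (outer i)
    with V_p show ?thesis unfolding oedge_def by auto
  next
    case (spoke q)
    with V_p have "p = q mod (3 * k)" unfolding spoke_def by auto
    then show ?thesis using spoke spoke_mod by simp
  next
    case (inner q)
    with V_p have "p = q mod (3 * k) \<or> p = (q + k) mod (3 * k)" unfolding inner_edge_def by auto
    then show ?thesis
    proof
      assume "p = q mod (3 * k)"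
      then show ?thesis using inner inner_edge_mod by simp
    next
      assume "p = (q + k) mod (3 * k)"
      then show ?thesis using inner inner_edge_opposite by simp
    qed
  qed
qed

lemma star_at_U:
  assumes "k \<ge> 1"
  shows "{oedge k (p + 3 * k - 1), oedge k p, spoke k p} \<subseteq> {e \<in> GP_edges k. U (p mod (3 * k)) \<in> e}"
    and "distinct [oedge k (p + 3 * k - 1), oedge k p, spoke k p]"
proof -
  have "U (p mod (3 * k)) \<in> oedge k (p + 3 * k - 1)" unfolding oedge_pred[OF assms] by simp
  moreover have "U (p mod (3 * k)) \<in> oedge k p" "U (p mod (3 * k)) \<in> spoke k p"
    unfolding oedge_def spoke_def by simp_all
  ultimately show "{oedge k (p + 3 * k - 1), oedge k p, spoke k p} \<subseteq> {e \<in> GP_edges k. U (p mod (3 * k)) \<in> e}"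
    using oedge_in_outer_edges[OF assms] outer_edges_subset_GP_edges spoke_in_GP_edges[OF assms]
    by blast
  have "(p + 1) mod (3 * k) \<noteq> p mod (3 * k)"
    using assms by (intro mod_add_shift_neq) simp_all
  moreover have "(p + 1) mod (3 * k) \<noteq> (p + 3 * k - 1) mod (3 * k)"
  proof -
    have "p + 3 * k - 1 + 2 = (p + 1) + 3 * k" using assms by simp
    then have "(p + 3 * k - 1 + 2) mod (3 * k) = (p + 1) mod (3 * k)" by (simp only: mod_add_self2)
    then show ?thesis using mod_add_shift_neq[of 2 "3 * k" "p + 3 * k - 1"] assms by simp
  qed
  ultimately have "U ((p + 1) mod (3 * k)) \<notin> oedge k (p + 3 * k - 1)"
    unfolding oedge_pred[OF assms] by auto
  then have "oedge k (p + 3 * k - 1) \<noteq> oedge k p" unfolding oedge_def by auto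
  then show "distinct [oedge k (p + 3 * k - 1), oedge k p, spoke k p]"
    by (auto simp: oedge_def spoke_def)
qed

lemma star_at_V:
  assumes "k \<ge> 1"
  shows "{spoke k p, inner_edge k p, inner_edge k (p + 2 * k)} \<subseteq> {e \<in> GP_edges k. V (p mod (3 * k)) \<in> e}"
    and "distinct [spoke k p, inner_edge k p, inner_edge k (p + 2 * k)]"
proof -
  have "(p + 2 * k + k) mod (3 * k) = p mod (3 * k)" by (simp add: add.assoc)
  then have "V (p mod (3 * k)) \<in> inner_edge k (p + 2 * k)" unfolding inner_edge_def by simp
  moreover have "V (p mod (3 * k)) \<in> spoke k p" "V (p mod (3 * k)) \<in> inner_edge k p"
    unfolding spoke_def inner_edge_def by simp_all
  ultimately show "{spoke k p, inner_edge k p, inner_edge k (p + 2 * k)} \<subseteq> {e \<in> GP_edges k. V (p mod (3 * k)) \<in> e}"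
    using spoke_in_GP_edges[OF assms] inner_edge_in_GP_edges[OF assms] by blast
  have "(p + 2 * k) mod (3 * k) \<noteq> p mod (3 * k)"
    using assms by (intro mod_add_shift_neq) simp_all
  then have "inner_edge k p \<noteq> inner_edge k (p + 2 * k)"
    using inner_edge_eq_imp_mod_eq[OF assms, of p "p + 2 * k"] by auto
  then show "distinct [spoke k p, inner_edge k p, inner_edge k (p + 2 * k)]"
    using inner_edge_neq_spoke[of k p p] inner_edge_neq_spoke[of k "p + 2 * k" p] by auto
qed

section \<open>Colours forced by the outer cycle\<close>

text \<open>Here p + 3k - 1 stands for p - 1 modulo 3k, avoiding truncated subtraction at p = 0.\<close>

definition spoke_colour :: "nat \<Rightarrow> (gpv set \<Rightarrow> nat) \<Rightarrow> nat \<Rightarrow> nat" where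
  "spoke_colour k phi p = third_colour (phi (oedge k (p + 3 * k - 1))) (phi (oedge k p))"

text \<open>The index chosen by SOME is determined only modulo 3k, which spoke_colour does not see.\<close>

definition forced_extension :: "nat \<Rightarrow> (gpv set \<Rightarrow> nat) \<Rightarrow> gpv set \<Rightarrow> nat" where
  "forced_extension k phi e =
     (if e \<in> outer_edges k then phi e
      else if \<exists>p. e = spoke k p then spoke_colour k phi (SOME p. e = spoke k p)
      else spoke_colour k phi ((SOME p. e = inner_edge k p) + 2 * k))"

lemma spoke_colour_mod:
  assumes "k \<ge> 1"
  shows "spoke_colour k phi (p mod (3 * k)) = spoke_colour k phi p"
proof -
  have "(p mod (3 * k) + (3 * k - 1)) mod (3 * k) = (p + (3 * k - 1)) mod (3 * k)"
    by (rule mod_add_left_eq)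
  moreover have "p mod (3 * k) + 3 * k - 1 = p mod (3 * k) + (3 * k - 1)"
    and "p + 3 * k - 1 = p + (3 * k - 1)"
    using assms by simp_all
  ultimately show ?thesis unfolding spoke_colour_def by (metis oedge_mod)
qed

lemma spoke_colour_add_period [simp]:
  assumes "k \<ge> 1"
  shows "spoke_colour k phi (p + 3 * k) = spoke_colour k phi p"
  using spoke_colour_mod[OF assms, of phi p] spoke_colour_mod[OF assms, of phi "p + 3 * k"] by simp

lemma spoke_colour_Suc:
  "spoke_colour k phi (Suc p) = third_colour (phi (oedge k p)) (phi (oedge k (Suc p)))"
proof -
  have "Suc p + 3 * k - 1 = p + 3 * k" by simp
  then show ?thesis unfolding spoke_colour_def by simp
qed

context
  fixes k :: nat and phi :: "gpv set \<Rightarrow> nat"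
  assumes k_pos: "k \<ge> 1" and phi_proper: "proper_edge_colouring (outer_edges k) phi"
begin

lemma outer_colour_range: "phi (oedge k i) \<in> {1, 2, 3}"
  using phi_proper oedge_in_outer_edges[OF k_pos] by (rule proper_edge_colouring_range)

lemma outer_colours_at_U_distinct: "phi (oedge k (p + 3 * k - 1)) \<noteq> phi (oedge k p)"
proof -
  have "U (p mod (3 * k)) \<in> oedge k (p + 3 * k - 1)" "U (p mod (3 * k)) \<in> oedge k p"
    using star_at_U(1)[OF k_pos, of p] by auto
  moreover have "oedge k (p + 3 * k - 1) \<noteq> oedge k p" using star_at_U(2)[OF k_pos, of p] by simp
  ultimately show ?thesis
    using oedge_in_outer_edges[OF k_pos] by (intro proper_edge_colouringD[OF phi_proper])
qed

lemma outer_colours_Suc_distinct: "phi (oedge k p) \<noteq> phi (oedge k (Suc p))"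
proof -
  have "Suc p + 3 * k - 1 = p + 3 * k" by simp
  then show ?thesis using outer_colours_at_U_distinct[of "Suc p"] by simp
qed

lemma spoke_colour_distinct:
  "spoke_colour k phi p \<in> {1, 2, 3} \<and>
   distinct [phi (oedge k (p + 3 * k - 1)), phi (oedge k p), spoke_colour k phi p]"
  unfolding spoke_colour_def
  by (rule third_colour_distinct[OF outer_colour_range outer_colour_range outer_colours_at_U_distinct])

lemma admissible_step_phi_tr_iff:
  "admissible_step (phi_tr k phi i) (phi_tr k phi (i + 1)) \<longleftrightarrow>
   distinct [spoke_colour k phi (i + 1), spoke_colour k phi (i + 1 + k), spoke_colour k phi (i + 1 + 2 * k)]"
  using outer_colour_range outer_colours_Suc_distinct
  by (simp add: phi_tr_def spoke_colour_Suc add.commute add.left_commute)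

context
  fixes \<gamma> :: "gpv set \<Rightarrow> nat"
  assumes \<gamma>_proper: "proper_edge_colouring (GP_edges k) \<gamma>"
    and \<gamma>_extends: "\<forall>e\<in>outer_edges k. \<gamma> e = phi e"
begin

lemma extension_spoke_colour: "\<gamma> (spoke k p) = spoke_colour k phi p"
proof -
  have "distinct [\<gamma> (oedge k (p + 3 * k - 1)), \<gamma> (oedge k p), \<gamma> (spoke k p)]"
    using star_at_U[OF k_pos] by (intro proper_edge_colouring_distinct3[OF \<gamma>_proper]) auto
  then have "distinct [phi (oedge k (p + 3 * k - 1)), phi (oedge k p), \<gamma> (spoke k p)]"
    using \<gamma>_extends oedge_in_outer_edges[OF k_pos] by simp
  moreover have "\<gamma> (spoke k p) \<in> {1, 2, 3}"
    using \<gamma>_proper spoke_in_GP_edges[OF k_pos] by (rule proper_edge_colouring_range)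
  ultimately show ?thesis
    unfolding spoke_colour_def using outer_colour_range by (intro third_colour_unique)
qed

lemma extension_inner_colours_at_V:
  "distinct [spoke_colour k phi p, \<gamma> (inner_edge k p), \<gamma> (inner_edge k (p + 2 * k))]"
proof -
  have "distinct [\<gamma> (spoke k p), \<gamma> (inner_edge k p), \<gamma> (inner_edge k (p + 2 * k))]"
    using star_at_V[OF k_pos, of p] by (intro proper_edge_colouring_distinct3[OF \<gamma>_proper]) auto
  then show ?thesis by (simp only: extension_spoke_colour)
qed

lemma extension_inner_colour: "\<gamma> (inner_edge k p) = spoke_colour k phi (p + 2 * k)"
proof -
  define g where "g q = \<gamma> (inner_edge k q)" for q
  have at_V: "distinct [spoke_colour k phi q, g q, g (q + 2 * k)]" for q
    unfolding g_def by (rule extension_inner_colours_at_V)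
  have g_range: "g q \<in> {1, 2, 3}" for q
    unfolding g_def using \<gamma>_proper inner_edge_in_GP_edges[OF k_pos] by (rule proper_edge_colouring_range)
  have g_period: "g (q + 3 * k) = g q" for q
    unfolding g_def by simp
  have "g (p + 2 * k + 2 * k) = g (p + k)" and "g (p + k + 2 * k) = g p"
    using g_period[of "p + k"] g_period[of p] by (simp_all add: algebra_simps)
  then have "distinct [g (p + 2 * k), g (p + k), g p]"
    and "distinct [g (p + 2 * k), g (p + k), spoke_colour k phi (p + 2 * k)]"
    using at_V[of p] at_V[of "p + k"] at_V[of "p + 2 * k"] by auto
  \<comment> \<open>both are the colour missing from the other two edges of the triangle\<close>
  then have "g p = third_colour (g (p + 2 * k)) (g (p + k))"
    and "spoke_colour k phi (p + 2 * k) = third_colour (g (p + 2 * k)) (g (p + k))"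
    using g_range spoke_colour_distinct by (blast intro: third_colour_unique)+
  then show ?thesis unfolding g_def by simp
qed

lemma extension_spoke_colours_distinct: "spoke_colour k phi p \<noteq> spoke_colour k phi (p + k)"
proof -
  have four: "p + 2 * k + 2 * k = (p + k) + 3 * k" and three: "p + k + 2 * k = p + 3 * k"
    by simp_all
  have "distinct [spoke_colour k phi (p + 2 * k), \<gamma> (inner_edge k (p + 2 * k)), \<gamma> (inner_edge k (p + k))]"
    using extension_inner_colours_at_V[of "p + 2 * k"] by (simp only: four inner_edge_add_period)
  moreover have "\<gamma> (inner_edge k (p + 2 * k)) = spoke_colour k phi (p + k)"
    using extension_inner_colour[of "p + 2 * k"] by (simp only: four spoke_colour_add_period[OF k_pos])
  moreover have "\<gamma> (inner_edge k (p + k)) = spoke_colour k phi p"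
    using extension_inner_colour[of "p + k"] by (simp only: three spoke_colour_add_period[OF k_pos])
  ultimately show ?thesis by auto
qed

end

lemma forced_extension_outer: "e \<in> outer_edges k \<Longrightarrow> forced_extension k phi e = phi e"
  unfolding forced_extension_def by simp

lemma forced_extension_spoke: "forced_extension k phi (spoke k p) = spoke_colour k phi p"
proof -
  have "spoke k p = spoke k (SOME q. spoke k p = spoke k q)" by (rule someI) (rule refl)
  then have "spoke_colour k phi (SOME q. spoke k p = spoke k q) = spoke_colour k phi p"
    using spoke_eq_imp_mod_eq spoke_colour_mod[OF k_pos] by metis
  then show ?thesis unfolding forced_extension_def using spoke_not_outer by auto
qed

lemma forced_extension_inner: "forced_extension k phi (inner_edge k p) = spoke_colour k phi (p + 2 * k)"
proof -
  have "inner_edge k p = inner_edge k (SOME q. inner_edge k p = inner_edge k q)" by (rule someI) (rule refl)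
  then have "p mod (3 * k) = (SOME q. inner_edge k p = inner_edge k q) mod (3 * k)"
    by (rule inner_edge_eq_imp_mod_eq[OF k_pos])
  then have "(p + 2 * k) mod (3 * k) = ((SOME q. inner_edge k p = inner_edge k q) + 2 * k) mod (3 * k)"
    by (rule mod_add_cong) (rule refl)
  then have "spoke_colour k phi ((SOME q. inner_edge k p = inner_edge k q) + 2 * k) = spoke_colour k phi (p + 2 * k)"
    using spoke_colour_mod[OF k_pos] by metis
  then show ?thesis
    unfolding forced_extension_def using inner_edge_not_outer inner_edge_neq_spoke by auto
qed

lemma forced_extension_proper:
  assumes rainbow: "\<forall>p. spoke_colour k phi p \<noteq> spoke_colour k phi (p + k)"
  shows "proper_edge_colouring (GP_edges k) (forced_extension k phi)"
proof (rule proper_edge_colouringI)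
  fix e
  assume "e \<in> GP_edges k"
  then show "forced_extension k phi e \<in> {1, 2, 3}"
  proof (cases rule: GP_edges_cases)
    case (outer i)
    then show ?thesis
      using forced_extension_outer oedge_in_outer_edges[OF k_pos] outer_colour_range by simp
  next
    case (spoke p)
    then show ?thesis using forced_extension_spoke spoke_colour_distinct by simp
  next
    case (inner p)
    then show ?thesis using forced_extension_inner spoke_colour_distinct by simp
  qed
next
  fix v
  show "\<exists>e1 e2 e3. {e \<in> GP_edges k. v \<in> e} \<subseteq> {e1, e2, e3} \<and>
    distinct [forced_extension k phi e1, forced_extension k phi e2, forced_extension k phi e3]"
  proof (cases v)
    case (U p)
    have "distinct [forced_extension k phi (oedge k (p + 3 * k - 1)), forced_extension k phi (oedge k p),
        forced_extension k phi (spoke k p)]"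
      using spoke_colour_distinct[of p] oedge_in_outer_edges[OF k_pos]
      by (simp add: forced_extension_outer forced_extension_spoke)
    with GP_edges_at_U[OF k_pos, of p] show ?thesis unfolding U by blast
  next
    case (V p)
    have "p + 2 * k + 2 * k = (p + k) + 3 * k" and "p + 2 * k + k = p + 3 * k" by simp_all
    then have "spoke_colour k phi (p + 2 * k + 2 * k) = spoke_colour k phi (p + k)"
      and "spoke_colour k phi (p + 2 * k + k) = spoke_colour k phi p"
      by (simp_all only: spoke_colour_add_period[OF k_pos])
    then have "distinct [spoke_colour k phi p, spoke_colour k phi (p + 2 * k),
        spoke_colour k phi (p + 2 * k + 2 * k)]"
      using rainbow[rule_format, of p] rainbow[rule_format, of "p + k"] rainbow[rule_format, of "p + 2 * k"]
      by (auto simp: mult_2 add.assoc)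
    then have "distinct [forced_extension k phi (spoke k p), forced_extension k phi (inner_edge k p),
        forced_extension k phi (inner_edge k (p + 2 * k))]"
      by (simp add: forced_extension_spoke forced_extension_inner)
    with GP_edges_at_V[of k p] show ?thesis unfolding V by blast
  qed
qed

lemma extension_exists_iff:
  "(\<exists>\<gamma>. proper_edge_colouring (GP_edges k) \<gamma> \<and> (\<forall>e\<in>outer_edges k. \<gamma> e = phi e)) \<longleftrightarrow>
   (\<forall>p. spoke_colour k phi p \<noteq> spoke_colour k phi (p + k))"
  using extension_spoke_colours_distinct forced_extension_proper forced_extension_outer by blast

lemma extension_unique:
  assumes "proper_edge_colouring (GP_edges k) \<gamma>1" and "\<forall>e\<in>outer_edges k. \<gamma>1 e = phi e"
    and "proper_edge_colouring (GP_edges k) \<gamma>2" and "\<forall>e\<in>outer_edges k. \<gamma>2 e = phi e"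
    and "e \<in> GP_edges k"
  shows "\<gamma>1 e = \<gamma>2 e"
  using assms(5)
proof (cases rule: GP_edges_cases)
  case (outer i)
  then show ?thesis using assms(2,4) oedge_in_outer_edges[OF k_pos] by simp
next
  case (spoke p)
  then show ?thesis using extension_spoke_colour[OF assms(1,2)] extension_spoke_colour[OF assms(3,4)] by simp
next
  case (inner p)
  then show ?thesis using extension_inner_colour[OF assms(1,2)] extension_inner_colour[OF assms(3,4)] by simp
qed

end

theorem lemma3:
  fixes k :: nat and phi :: "gpv set \<Rightarrow> nat"
  assumes "k \<ge> 1"
    and "proper_edge_colouring (outer_edges k) phi"
  shows "((\<exists>\<gamma>. proper_edge_colouring (GP_edges k) \<gamma> \<and> (\<forall>e\<in>outer_edges k. \<gamma> e = phi e))
          \<longleftrightarrow>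
          (\<exists>a b c. {a,b,c} = {1,2,3::nat} \<and>
             (\<forall>i\<in>{1..k}. T_adj a b c (phi_tr k phi i) (phi_tr k phi (i+1))
                        \<or> H_adj a b c (phi_tr k phi i) (phi_tr k phi (i+1)))))
       \<and> (\<forall>\<gamma>1 \<gamma>2. proper_edge_colouring (GP_edges k) \<gamma>1 \<and> (\<forall>e\<in>outer_edges k. \<gamma>1 e = phi e)
              \<and> proper_edge_colouring (GP_edges k) \<gamma>2 \<and> (\<forall>e\<in>outer_edges k. \<gamma>2 e = phi e)
              \<longrightarrow> (\<forall>e\<in>GP_edges k. \<gamma>1 e = \<gamma>2 e))"
proof -
  let ?S = "spoke_colour k phi"
  have "(\<exists>\<gamma>. proper_edge_colouring (GP_edges k) \<gamma> \<and> (\<forall>e\<in>outer_edges k. \<gamma> e = phi e))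
      \<longleftrightarrow> (\<forall>p. ?S p \<noteq> ?S (p + k))"
    by (rule extension_exists_iff[OF assms])
  also have "\<dots> \<longleftrightarrow> (\<forall>i\<in>{1..k}. distinct [?S (i + 1), ?S (i + 1 + k), ?S (i + 1 + 2 * k)])"
    using assms(1) by (intro periodic_shift_distinct_iff) simp_all
  also have "\<dots> \<longleftrightarrow> (\<forall>i\<in>{1..k}. admissible_step (phi_tr k phi i) (phi_tr k phi (i + 1)))"
    by (simp only: admissible_step_phi_tr_iff[OF assms])
  also have "\<dots> \<longleftrightarrow> (\<exists>a b c. {a, b, c} = {1, 2, 3::nat} \<and>
      (\<forall>i\<in>{1..k}. TH_adj a b c (phi_tr k phi i) (phi_tr k phi (i + 1))))"
    by (rule admissible_chain_iff_TH_chain)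
  finally show ?thesis
    using extension_unique[OF assms] unfolding TH_adj_def by blast
qed

end
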